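(* Let $R=\mathbb{Z}$ (with $K=\mathbb{Q}$) or $R=\mathbb{Z}[i]$ (with $K=\mathbb{Q}(i)$). Let $M=\begin{pmatrix}\alpha&\beta\\ \overline{\beta}&\gamma\end{pmatrix}\in R^{2\times2}$ be positive definite hermitian such that $\Delta:=\det M$ is an absolute square in $K$, let $Q(v)=v^*Mv$, let $\nu$ be a positive integer, $\lambda:=\nu\Delta$, and let $\delta\in\frac1\nu R$ with $|\delta|^2=\Delta$. Then: (1) If $R=\mathbb{Z}$, there exists an integral $Q$-orthoregular basis of norm $\lambda$ and type $\delta$ if and only if $\alpha\nu$ is a sum of two squares of integers. (2) If $R=\mathbb{Z}[i]$, there always exists an integral $Q$-orthoregular basis of norm $\lambda$ and type $\delta$. (3) In both cases, every $a_1\in R^2$ with $Q(a_1)=\lambda$ can be extended to an integral $Q$-orthoregular basis $(a_1,a_2)$ of norm $\lambda$.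
   Context: A rational number is an absolute square in $K$ if it equals $|y|^2$ for some $y\in K$. An integral $Q$-orthoregular basis of norm $\lambda$ is a pair $(a_1,a_2)\in R^2\times R^2$ with $a_1^*Ma_1=a_2^*Ma_2=\lambda$ and $a_1^*Ma_2=0$. It is of type $\delta$ if $a_2=(Ma_1)_\perp/\delta$, where $(x,y)^T_\perp:=(-\overline{y},\overline{x})^T$. *)

theory Defs
  imports "HOL-Analysis.Analysis"
begin

datatype ring_case = IntCase | GaussCase

definition Rset :: "ring_case \<Rightarrow> complex set" where
  "Rset c = (case c of
      IntCase \<Rightarrow> {z. \<exists>n::int. z = of_int n}
    | GaussCase \<Rightarrow> {z. \<exists>m n::int. z = Complex (of_int m) (of_int n)})"

definition Kset :: "ring_case \<Rightarrow> complex set" where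
  "Kset c = (case c of
      IntCase \<Rightarrow> {z. \<exists>q::rat. z = of_rat q}
    | GaussCase \<Rightarrow> {z. \<exists>p q::rat. z = Complex (of_rat p) (of_rat q)})"

definition Rvec :: "ring_case \<Rightarrow> (complex^2) set" where
  "Rvec c = {v. \<forall>i. v $ i \<in> Rset c}"

definition abs_square_in :: "ring_case \<Rightarrow> complex \<Rightarrow> bool" where
  "abs_square_in c x \<longleftrightarrow> (\<exists>y \<in> Kset c. x = of_real ((cmod y)^2))"

definition hform :: "complex^2^2 \<Rightarrow> complex^2 \<Rightarrow> complex^2 \<Rightarrow> complex" where
  "hform M u v = (\<Sum>i\<in>UNIV. cnj (u $ i) * (M *v v) $ i)"

definition hermitian2 :: "complex^2^2 \<Rightarrow> bool" where
  "hermitian2 M \<longleftrightarrow> (\<forall>i j. M $ i $ j = cnj (M $ j $ i))"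

definition posdef2 :: "complex^2^2 \<Rightarrow> bool" where
  "posdef2 M \<longleftrightarrow> (\<forall>v. v \<noteq> 0 \<longrightarrow> hform M v v \<in> \<real> \<and> Re (hform M v v) > 0)"

definition perp :: "complex^2 \<Rightarrow> complex^2" where
  "perp v = vector [- cnj (v $ 2), cnj (v $ 1)]"

definition orthoregular :: "ring_case \<Rightarrow> complex^2^2 \<Rightarrow> complex \<Rightarrow> complex^2 \<Rightarrow> complex^2 \<Rightarrow> bool" where
  "orthoregular c M lam a1 a2 \<longleftrightarrow>
     a1 \<in> Rvec c \<and> a2 \<in> Rvec c \<and>
     hform M a1 a1 = lam \<and> hform M a2 a2 = lam \<and> hform M a1 a2 = 0"

definition orthoregular_type :: "ring_case \<Rightarrow> complex^2^2 \<Rightarrow> complex \<Rightarrow> complex \<Rightarrow> complex^2 \<Rightarrow> complex^2 \<Rightarrow> bool" where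
  "orthoregular_type c M lam \<delta> a1 a2 \<longleftrightarrow>
     orthoregular c M lam a1 a2 \<and> a2 = (1 / \<delta>) *s perp (M *v a1)"

end

theory Submission
  imports Defs "HOL-Computational_Algebra.Primes"
begin

text \<open>A basis of type \<open>\<delta>\<close> has no freedom in \<open>a\<^sub>2 = (M a\<^sub>1)\<^sub>\<perp> / \<delta>\<close>, and
  \<open>Q(a\<^sub>2) = Q(a\<^sub>1)\<close>, \<open>a\<^sub>1\<^sup>* M a\<^sub>2 = 0\<close> hold automatically because \<open>|\<delta>|\<^sup>2 = det M\<close>; the
  only issue is integrality. Writing \<open>a\<^sub>1 = ((\<delta>\<^sup>* s - \<beta> q) / \<alpha>, q)\<close>, one needs
  \<open>s, q \<in> R\<close> with \<open>|s|\<^sup>2 + |q|\<^sup>2 = \<nu> \<alpha>\<close> and \<open>\<alpha>\<close> dividing \<open>\<delta>\<^sup>* s - \<beta> q\<close> and \<open>\<beta>\<^sup>* s + \<delta> q\<close>.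
  Over \<open>\<int>[i]\<close> such \<open>s + q j\<close> is a left factor of norm \<open>\<nu> \<alpha>\<close> of a Lipschitz quaternion,
  which exists by Euler's descent. Over \<open>\<int>\<close> this forces \<open>\<nu> \<alpha>\<close> to be a sum of two squares;
  conversely a representation \<open>\<nu> \<alpha> = |z|\<^sup>2\<close> is made compatible using a Gaussian gcd and the
  Davenport--Cassels descent. For the extension property one takes \<open>a\<^sub>2 = k (M a\<^sub>1)\<^sub>\<perp>\<close> with
  \<open>k = h\<^sup>* / g\<^sup>*\<close>, where \<open>g\<close> is a gcd of the entries of \<open>M a\<^sub>1\<close>, \<open>|g|\<^sup>2\<close> is a multiple of
  \<open>det M\<close>, and Davenport--Cassels again yields \<open>|h|\<^sup>2 = |g|\<^sup>2 / det M\<close>.\<close>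

section \<open>Lipschitz quaternions\<close>

text \<open>\<open>Quat a b c d\<close> stands for \<open>a + b i + c j + d k\<close>, with \<open>i j = k\<close>.\<close>

datatype quat = Quat (qr: int) (qi: int) (qj: int) (qk: int)

lemma quat_eq_iff: "x = y \<longleftrightarrow> qr x = qr y \<and> qi x = qi y \<and> qj x = qj y \<and> qk x = qk y"
  by (cases x; cases y) simp

instantiation quat :: ring_1
begin

definition "0 = Quat 0 0 0 0"
definition "1 = Quat 1 0 0 0"
definition "x + y = Quat (qr x + qr y) (qi x + qi y) (qj x + qj y) (qk x + qk y)"
definition "- x = Quat (- qr x) (- qi x) (- qj x) (- qk x)"
definition "x - y = Quat (qr x - qr y) (qi x - qi y) (qj x - qj y) (qk x - qk y)"
definition "x * y = Quat
   (qr x * qr y - qi x * qi y - qj x * qj y - qk x * qk y)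
   (qr x * qi y + qi x * qr y + qj x * qk y - qk x * qj y)
   (qr x * qj y - qi x * qk y + qj x * qr y + qk x * qi y)
   (qr x * qk y + qi x * qj y - qj x * qi y + qk x * qr y)"

lemmas quat_ops_def = zero_quat_def one_quat_def plus_quat_def uminus_quat_def
  minus_quat_def times_quat_def

instance
  by standard (simp_all add: quat_eq_iff quat_ops_def algebra_simps)

end

instance quat :: Rings.dvd ..

definition quat_cnj :: "quat \<Rightarrow> quat" where
  "quat_cnj x = Quat (qr x) (- qi x) (- qj x) (- qk x)"

definition quat_norm :: "quat \<Rightarrow> int" where
  "quat_norm x = qr x ^ 2 + qi x ^ 2 + qj x ^ 2 + qk x ^ 2"

lemma of_int_quat: "of_int m = Quat m 0 0 0"
proof -
  have "of_nat n = Quat (int n) 0 0 0" for n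
    by (induction n) (simp_all add: quat_ops_def)
  then show ?thesis
    by (cases m rule: int_cases) (simp_all add: quat_ops_def)
qed

lemma of_int_mult_quat: "of_int m * x = Quat (m * qr x) (m * qi x) (m * qj x) (m * qk x)"
  by (simp add: of_int_quat times_quat_def)

lemma quat_mult_of_int_commute: "x * of_int m = of_int m * (x :: quat)"
  by (simp add: of_int_quat times_quat_def algebra_simps)

lemma quat_norm_mult: "quat_norm (x * y) = quat_norm x * quat_norm y"
  by (simp add: quat_norm_def times_quat_def power2_eq_square algebra_simps)

lemma quat_norm_of_int: "quat_norm (of_int m) = m ^ 2"
  by (simp add: quat_norm_def of_int_quat)

lemma quat_norm_nonneg: "quat_norm x \<ge> 0"
  by (simp add: quat_norm_def)

lemma quat_norm_eq_0_iff: "quat_norm x = 0 \<longleftrightarrow> x = 0"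
  by (simp add: quat_norm_def quat_eq_iff zero_quat_def add_nonneg_eq_0_iff)

lemma quat_norm_uminus: "quat_norm (- x) = quat_norm x"
  by (simp add: quat_norm_def uminus_quat_def)

lemma quat_norm_cnj: "quat_norm (quat_cnj x) = quat_norm x"
  by (simp add: quat_norm_def quat_cnj_def)

lemma quat_cnj_mult_self: "quat_cnj x * x = of_int (quat_norm x)"
  by (simp add: quat_cnj_def quat_norm_def of_int_quat times_quat_def power2_eq_square)

lemma of_int_dvd_quat_iff:
  "of_int m dvd x \<longleftrightarrow> m dvd qr x \<and> m dvd qi x \<and> m dvd qj x \<and> m dvd qk x"
proof
  assume "m dvd qr x \<and> m dvd qi x \<and> m dvd qj x \<and> m dvd qk x"
  then obtain a b c d where "qr x = m * a" "qi x = m * b" "qj x = m * c" "qk x = m * d"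
    by (auto elim!: dvdE)
  then have "x = of_int m * Quat a b c d"
    by (simp add: of_int_mult_quat quat_eq_iff)
  then show "of_int m dvd x" ..
qed (auto simp: of_int_mult_quat)

lemma of_int_dvd_quat_mult_left: "of_int m dvd y \<Longrightarrow> of_int m dvd x * (y :: quat)"
  by (metis dvdE dvdI mult.assoc quat_mult_of_int_commute)

lemma of_int_dvd_quat_add: "of_int m dvd x \<Longrightarrow> of_int m dvd y \<Longrightarrow> of_int m dvd (x + y :: quat)"
  by (metis dvdE dvdI distrib_left)

lemma of_int_dvd_quat_of_int: "m dvd n \<Longrightarrow> of_int m dvd (of_int n :: quat)"
  unfolding of_int_dvd_quat_iff by (simp add: of_int_quat)

lemma prime_dvd_quat_cancel:
  assumes "prime p" "\<not> p dvd m" "of_int p dvd of_int m * x"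
  shows "of_int p dvd (x :: quat)"
  using assms by (auto simp: of_int_dvd_quat_iff of_int_mult_quat prime_dvd_mult_iff)

lemma quat_norm_even_factor:
  assumes "even (quat_norm x)"
  shows "\<exists>u. quat_norm u = 2 \<and> of_int 2 dvd u * x"
proof -
  obtain a b c d where x: "x = Quat a b c d" by (cases x)
  have "even (a + b + c + d)"
    using assms by (simp add: x quat_norm_def power2_eq_square)
  then have "even (a - b) \<and> even (c - d) \<or> even (a - c) \<and> even (b - d)
      \<or> even (a - d) \<and> even (b - c)"
    by presburger
  then consider "even (a - b)" "even (c - d)" | "even (a - c)" "even (b - d)"
    | "even (a - d)" "even (b - c)"
    by blast
  then show ?thesis
  proof cases
    case 1
    then have "of_int 2 dvd Quat 1 1 0 0 * x"
      unfolding of_int_dvd_quat_iff by (simp add: times_quat_def x; presburger)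
    then show ?thesis by (intro exI[of _ "Quat 1 1 0 0"]) (simp add: quat_norm_def)
  next
    case 2
    then have "of_int 2 dvd Quat 1 0 1 0 * x"
      unfolding of_int_dvd_quat_iff by (simp add: times_quat_def x; presburger)
    then show ?thesis by (intro exI[of _ "Quat 1 0 1 0"]) (simp add: quat_norm_def)
  next
    case 3
    then have "of_int 2 dvd Quat 1 0 0 1 * x"
      unfolding of_int_dvd_quat_iff by (simp add: times_quat_def x; presburger)
    then show ?thesis by (intro exI[of _ "Quat 1 0 0 1"]) (simp add: quat_norm_def)
  qed
qed

definition sym_mod :: "int \<Rightarrow> int \<Rightarrow> int" where
  "sym_mod a m = (a + m div 2) mod m - m div 2"

lemma sym_mod_eq: "a = m * ((a + m div 2) div m) + sym_mod a m"
  using div_mult_mod_eq[of "a + m div 2" m] by (simp add: sym_mod_def algebra_simps)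

lemma sym_mod_bound:
  assumes "m > 0"
  shows "2 * \<bar>sym_mod a m\<bar> \<le> m"
proof -
  have "0 \<le> (a + m div 2) mod m" "(a + m div 2) mod m < m"
    using assms by auto
  moreover have "m - 1 \<le> 2 * (m div 2)" "2 * (m div 2) \<le> m"
    by presburger+
  ultimately have "- (m div 2) \<le> sym_mod a m" "sym_mod a m \<le> m - 1 - m div 2"
    unfolding sym_mod_def by linarith+
  with \<open>m - 1 \<le> 2 * (m div 2)\<close> \<open>2 * (m div 2) \<le> m\<close>
  have "2 * sym_mod a m \<le> m" "- (2 * sym_mod a m) \<le> m"
    by linarith+
  then show ?thesis by (simp add: abs_if)
qed

lemma sym_mod_bound_odd:
  assumes "m > 0" "odd m"
  shows "4 * sym_mod a m ^ 2 \<le> (m - 1) ^ 2"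
proof -
  have "2 * \<bar>sym_mod a m\<bar> \<le> m - 1"
    using sym_mod_bound[OF assms(1), of a] assms(2) by presburger
  then have "(2 * \<bar>sym_mod a m\<bar>) ^ 2 \<le> (m - 1) ^ 2"
    by (intro power_mono) auto
  then show ?thesis by (simp add: power_mult_distrib)
qed

definition quat_sym_mod :: "quat \<Rightarrow> int \<Rightarrow> quat" where
  "quat_sym_mod x m = Quat (sym_mod (qr x) m) (sym_mod (qi x) m) (sym_mod (qj x) m) (sym_mod (qk x) m)"

lemma quat_sym_mod_eq: "\<exists>t. quat_sym_mod x m = x + of_int m * t"
proof -
  let ?r = "\<lambda>a. - ((a + m div 2) div m)"
  have "quat_sym_mod x m = x + of_int m * Quat (?r (qr x)) (?r (qi x)) (?r (qj x)) (?r (qk x))"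
    using sym_mod_eq[of "qr x" m] sym_mod_eq[of "qi x" m] sym_mod_eq[of "qj x" m]
      sym_mod_eq[of "qk x" m]
    by (simp add: quat_eq_iff of_int_mult_quat quat_sym_mod_def plus_quat_def algebra_simps)
  then show ?thesis ..
qed

lemma quat_norm_sym_mod_odd:
  assumes "m > 0" "odd m"
  shows "quat_norm (quat_sym_mod x m) \<le> (m - 1) ^ 2"
  using sym_mod_bound_odd[OF assms, of "qr x"] sym_mod_bound_odd[OF assms, of "qi x"]
    sym_mod_bound_odd[OF assms, of "qj x"] sym_mod_bound_odd[OF assms, of "qk x"]
  by (simp add: quat_norm_def quat_sym_mod_def)

lemma quat_cnj_add: "quat_cnj (x + y) = quat_cnj x + quat_cnj y"
  by (simp add: quat_cnj_def plus_quat_def)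

lemma quat_cnj_of_int_mult: "quat_cnj (of_int m * x) = of_int m * quat_cnj x"
  by (simp add: quat_cnj_def of_int_mult_quat)

lemma quat_norm_cong: "m dvd quat_norm (x + of_int m * t) - quat_norm x"
proof
  show "quat_norm (x + of_int m * t) - quat_norm x =
      m * (2 * (qr x * qr t + qi x * qi t + qj x * qj t + qk x * qk t) + m * quat_norm t)"
    by (simp add: quat_norm_def plus_quat_def of_int_mult_quat power2_eq_square algebra_simps)
qed

lemma quat_descent_odd_step:
  assumes p: "prime p" and m: "odd m" "1 < m" "m < p"
    and x: "quat_norm x = m * p" "of_int p dvd x * w"
  shows "\<exists>z r. 0 < r \<and> r < m \<and> quat_norm z = r * p \<and> of_int p dvd z * w"
proof -
  define y where "y = quat_sym_mod x m"
  obtain t where y: "y = x + of_int m * t"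
    unfolding y_def using quat_sym_mod_eq by blast
  have "m dvd (quat_norm y - quat_norm x) + quat_norm x"
    using quat_norm_cong[of m x t] x(1) unfolding y by (intro dvd_add) simp_all
  then obtain r where r: "quat_norm y = m * r" by auto
  have "m * r \<le> (m - 1) ^ 2"
    using quat_norm_sym_mod_odd[of m x] m r unfolding y_def by simp
  also have "\<dots> < m * m" using m by (simp add: power2_eq_square algebra_simps)
  finally have "r < m" using m by simp
  have p_ndvd_m: "\<not> p dvd m" using m by (simp add: zdvd_not_zless)
  have "r \<noteq> 0"
  proof
    assume "r = 0"
    then have "x = - (of_int m * t)"
      using r y quat_norm_eq_0_iff[of y] by (simp add: eq_neg_iff_add_eq_0)
    then have "m * (m * quat_norm t) = m * p"
      using x(1) by (simp add: quat_norm_uminus quat_norm_mult quat_norm_of_int power2_eq_square)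
    then have "m dvd p" using m by (metis dvdI mult_cancel_left not_one_less_zero)
    then show False using prime_int_not_dvd[OF p] m by blast
  qed
  then have "r > 0" using r m quat_norm_nonneg[of y] by (simp add: zero_le_mult_iff less_le)
  define z where "z = of_int p + quat_cnj t * x"
  have yz: "quat_cnj y * x = of_int m * z"
    using x(1) unfolding y z_def
    by (simp add: quat_cnj_add quat_cnj_of_int_mult quat_cnj_mult_self distrib_left distrib_right
        mult.assoc)
  have "m * m * quat_norm z = m * r * (m * p)"
    using arg_cong[OF yz, of quat_norm] r x(1)
    by (auto simp: quat_norm_mult quat_norm_cnj quat_norm_of_int power2_eq_square)
  then have "quat_norm z = r * p" using m by auto
  moreover have "of_int p dvd of_int m * (z * w)"
    using of_int_dvd_quat_mult_left[OF x(2), of "quat_cnj y"] by (simp add: yz flip: mult.assoc)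
  then have "of_int p dvd z * w" using prime_dvd_quat_cancel[OF p p_ndvd_m] by blast
  ultimately show ?thesis using \<open>r > 0\<close> \<open>r < m\<close> by blast
qed

lemma quat_prime_descent:
  assumes p: "prime p" "odd p"
  shows "quat_norm x = m * p \<Longrightarrow> 0 < m \<Longrightarrow> m < p \<Longrightarrow> of_int p dvd x * w \<Longrightarrow>
    \<exists>\<xi>. quat_norm \<xi> = p \<and> of_int p dvd \<xi> * w"
proof (induction "nat m" arbitrary: m x rule: less_induct)
  case less
  consider "m = 1" | "even m" | "odd m" "1 < m"
    using less.prems(2) by linarith
  then show ?case
  proof cases
    case 1
    then show ?thesis using less.prems by auto
  next
    case 2
    then have "even (quat_norm x)" using less.prems(1) by simp
    then obtain u where u: "quat_norm u = 2" "of_int 2 dvd u * x"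
      using quat_norm_even_factor by blast
    from u(2) obtain z where z: "u * x = of_int 2 * z" ..
    obtain k where k: "m = 2 * k" using 2 ..
    have "4 * quat_norm z = 4 * (k * p)"
      using arg_cong[OF z, of quat_norm] u less.prems(1) k
      by (simp add: quat_norm_mult quat_norm_of_int[of 2, simplified])
    then have "quat_norm z = k * p" by simp
    have "of_int p dvd of_int 2 * (z * w)"
      using of_int_dvd_quat_mult_left[OF less.prems(4), of u] by (metis mult.assoc z)
    moreover have "\<not> p dvd 2"
    proof
      assume "p dvd 2"
      then have "p \<le> 2" by (simp add: zdvd_imp_le)
      moreover have "p \<noteq> 2" using p(2) by auto
      ultimately show False using prime_gt_1_int[OF p(1)] by simp
    qed
    ultimately have "of_int p dvd z * w" using prime_dvd_quat_cancel[OF p(1)] by blast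
    moreover have "0 < k" "k < m" using k less.prems(2) by simp_all
    ultimately show ?thesis
      using less.hyps[of k z] less.prems(3) \<open>quat_norm z = k * p\<close> by simp
  next
    case 3
    then obtain z r where "0 < r" "r < m" "quat_norm z = r * p" "of_int p dvd z * w"
      using quat_descent_odd_step[OF p(1)] less.prems by blast
    then show ?thesis using less.hyps[of r z] less.prems by simp
  qed
qed

lemma quat_prime_factor_nondvd:
  assumes p: "prime p" "odd p" and w: "p dvd quat_norm w" "\<not> of_int p dvd w"
  shows "\<exists>\<xi>. quat_norm \<xi> = p \<and> of_int p dvd \<xi> * w"
proof -
  have "p > 1" using p prime_gt_1_int by blast
  define x where "x = quat_sym_mod (quat_cnj w) p"
  obtain t where x: "x = quat_cnj w + of_int p * t"
    unfolding x_def using quat_sym_mod_eq by blast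
  have "x * w = of_int (quat_norm w) + of_int p * (t * w)"
    by (simp add: x distrib_right quat_cnj_mult_self mult.assoc)
  then have "of_int p dvd x * w"
    using w(1) by (metis dvdI of_int_dvd_quat_add of_int_dvd_quat_of_int)
  have "p dvd (quat_norm x - quat_norm w) + quat_norm w"
    using quat_norm_cong[of p "quat_cnj w" t] w(1) by (intro dvd_add) (simp_all add: x quat_norm_cnj)
  then obtain m where m: "quat_norm x = p * m" by auto
  have "p * m \<le> (p - 1) ^ 2"
    using quat_norm_sym_mod_odd[of p "quat_cnj w"] p \<open>p > 1\<close> m unfolding x_def by simp
  also have "\<dots> < p * p" using \<open>p > 1\<close> by (simp add: power2_eq_square algebra_simps)
  finally have "m < p" using \<open>p > 1\<close> by simp
  have "x \<noteq> 0"
  proof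
    assume "x = 0"
    then have "quat_cnj w = of_int p * - t" using x by (simp add: eq_neg_iff_add_eq_0)
    then have "of_int p dvd quat_cnj w" ..
    then show False using w(2) by (simp add: of_int_dvd_quat_iff quat_cnj_def)
  qed
  then have "quat_norm x > 0"
    using quat_norm_nonneg[of x] quat_norm_eq_0_iff[of x] by linarith
  then have "m > 0" using m \<open>p > 1\<close> by (simp add: zero_less_mult_iff)
  then show ?thesis
    using quat_prime_descent[OF p, of x m w] m \<open>m < p\<close> \<open>of_int p dvd x * w\<close>
    by (simp add: mult.commute)
qed

lemma square_mod_prime_inj:
  fixes p a b :: int
  assumes p: "prime p" "odd p" and a: "0 \<le> a" "2 * a < p" and b: "0 \<le> b" "2 * b < p"
    and eq: "p dvd a\<^sup>2 - b\<^sup>2"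
  shows "a = b"
proof -
  have "a\<^sup>2 - b\<^sup>2 = (a - b) * (a + b)" by (simp add: power2_eq_square algebra_simps)
  then have "p dvd a - b \<or> p dvd a + b" using eq p(1) prime_dvd_mult_iff by metis
  moreover have "\<bar>a - b\<bar> < p" "\<bar>a + b\<bar> < p" using a b by linarith+
  ultimately have "a - b = 0 \<or> a + b = 0"
    using dvd_imp_le_int[of "a - b" p] dvd_imp_le_int[of "a + b" p] prime_gt_1_int[OF p(1)]
    by force
  then show ?thesis using a b by linarith
qed

text \<open>Pigeonhole: the \<open>(p + 1) / 2\<close> residues \<open>a\<^sup>2\<close> and the \<open>(p + 1) / 2\<close> residues
  \<open>-1 - b\<^sup>2\<close> cannot be pairwise distinct modulo \<open>p\<close>.\<close>

lemma odd_prime_dvd_sum_two_squares_plus_one: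
  fixes p :: int
  assumes p: "prime p" "odd p"
  shows "\<exists>a b. p dvd a\<^sup>2 + b\<^sup>2 + 1"
proof (rule ccontr)
  assume no_ab: "\<not> ?thesis"
  define H where "H = {0..(p - 1) div 2}"
  define f where "f a = a\<^sup>2 mod p" for a
  define g where "g b = (- 1 - b\<^sup>2) mod p" for b
  have p1: "p > 1" using p prime_gt_1_int by blast
  have H: "0 \<le> a \<and> 2 * a < p" if "a \<in> H" for a
    using that p(2) unfolding H_def by auto
  have inj_f: "inj_on f H"
    by (rule inj_onI) (use square_mod_prime_inj[OF p] H in \<open>auto simp: f_def mod_eq_dvd_iff\<close>)
  have inj_g: "inj_on g H"
  proof (rule inj_onI)
    fix a b assume "a \<in> H" "b \<in> H" "g a = g b"
    then show "a = b"
      using square_mod_prime_inj[OF p, of b a] H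
      by (auto simp: g_def mod_eq_dvd_iff algebra_simps)
  qed
  have "f ` H \<inter> g ` H = {}"
    using no_ab by (auto simp: f_def g_def mod_eq_dvd_iff algebra_simps)
  then have "card H + card H = card (f ` H \<union> g ` H)"
    using inj_f inj_g by (simp add: H_def card_Un_disjoint card_image)
  also have "\<dots> \<le> card {0..<p}"
    using p1 by (intro card_mono) (auto simp: f_def g_def)
  finally have "card H + card H \<le> card {0..<p}" .
  moreover have "card H + card H = p + 1"
    using p(2) p1 unfolding H_def by simp
  ultimately show False using p1 by simp
qed

lemma quat_prime_factor:
  assumes p: "prime p" and w: "p dvd quat_norm w"
  shows "\<exists>\<xi>. quat_norm \<xi> = p \<and> of_int p dvd \<xi> * w"
proof (cases "p = 2")
  case True
  then show ?thesis using w quat_norm_even_factor by auto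
next
  case False
  then have "odd p" using p prime_ge_2_int[OF p] prime_odd_int by force
  show ?thesis
  proof (cases "of_int p dvd w")
    case True
    obtain a b where "p dvd a\<^sup>2 + b\<^sup>2 + 1"
      using odd_prime_dvd_sum_two_squares_plus_one[OF p \<open>odd p\<close>] by blast
    moreover have "\<not> of_int p dvd Quat a b 1 0"
      using prime_gt_1_int[OF p] by (auto simp: of_int_dvd_quat_iff zdvd_not_zless)
    ultimately obtain \<xi> where "quat_norm \<xi> = p"
      using quat_prime_factor_nondvd[OF p \<open>odd p\<close>, of "Quat a b 1 0"]
      by (auto simp: quat_norm_def)
    then show ?thesis using True of_int_dvd_quat_mult_left by blast
  next
    case False
    then show ?thesis using quat_prime_factor_nondvd[OF p \<open>odd p\<close> w] by blast
  qed
qed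

lemma quat_factor:
  fixes a :: int
  shows "0 < a \<Longrightarrow> a dvd quat_norm w \<Longrightarrow> \<exists>\<xi>. quat_norm \<xi> = a \<and> of_int a dvd \<xi> * w"
proof (induction "nat a" arbitrary: a w rule: less_induct)
  case less
  show ?case
  proof (cases "a = 1")
    case True
    then show ?thesis
      by (intro exI[of _ 1] conjI) (auto simp: quat_norm_def one_quat_def intro: dvdI)
  next
    case False
    then obtain p where p: "prime p" "p dvd a" using prime_factor_int[of a] less.prems by auto
    from p(2) obtain a' where a': "a = p * a'" ..
    have "p > 1" using p prime_gt_1_int by blast
    have "a' > 0" using a' less.prems \<open>p > 1\<close> by (simp add: zero_less_mult_iff)
    obtain \<xi>1 where \<xi>1: "quat_norm \<xi>1 = p" "of_int p dvd \<xi>1 * w"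
      using quat_prime_factor[OF p(1)] less.prems p dvd_trans by blast
    from \<xi>1(2) obtain w1 where w1: "\<xi>1 * w = of_int p * w1" ..
    have "p * quat_norm w = p * (p * quat_norm w1)"
      using arg_cong[OF w1, of quat_norm] \<xi>1(1)
      by (simp add: quat_norm_mult quat_norm_of_int power2_eq_square)
    then have "quat_norm w = p * quat_norm w1" using \<open>p > 1\<close> by simp
    then have "a' dvd quat_norm w1"
      using less.prems(2) a' \<open>p > 1\<close> by (auto elim!: dvdE)
    moreover have "nat a' < nat a" using a' \<open>p > 1\<close> \<open>a' > 0\<close> by simp
    ultimately obtain \<xi>' where \<xi>': "quat_norm \<xi>' = a'" "of_int a' dvd \<xi>' * w1"
      using less.hyps \<open>a' > 0\<close> by blast
    from \<xi>'(2) obtain \<eta> where \<eta>: "\<xi>' * w1 = of_int a' * \<eta>" ..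
    have "\<xi>' * \<xi>1 * w = \<xi>' * of_int p * w1"
      by (simp add: w1 mult.assoc)
    also have "\<dots> = of_int p * (\<xi>' * w1)"
      by (simp add: quat_mult_of_int_commute mult.assoc)
    also have "\<dots> = of_int a * \<eta>"
      by (simp add: \<eta> a' mult.assoc)
    finally have "\<xi>' * \<xi>1 * w = of_int a * \<eta>" .
    moreover have "quat_norm (\<xi>' * \<xi>1) = a" using \<xi>' \<xi>1 a' by (simp add: quat_norm_mult)
    ultimately show ?thesis by (metis dvdI)
  qed
qed

section \<open>Sums of two squares\<close>

text \<open>Reflecting the rational point \<open>(a, b) / k\<close> of the circle \<open>x\<^sup>2 + y\<^sup>2 = n\<close> through the
  lattice point \<open>(r\<^sub>1, r\<^sub>2)\<close> gives a rational point with denominator \<open>k'\<close>.\<close>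

lemma sum_two_squares_reflection:
  fixes k k' n r1 r2 e1 e2 :: int
  assumes k: "k \<noteq> 0" and ab: "(k * r1 + e1)\<^sup>2 + (k * r2 + e2)\<^sup>2 = n * k\<^sup>2"
    and k': "e1\<^sup>2 + e2\<^sup>2 = k * k'"
  shows "(k' * r1 + (r1\<^sup>2 + r2\<^sup>2 - n) * e1)\<^sup>2 + (k' * r2 + (r1\<^sup>2 + r2\<^sup>2 - n) * e2)\<^sup>2 = n * k'\<^sup>2"
proof -
  define S where "S = r1\<^sup>2 + r2\<^sup>2"
  define T where "T = r1 * e1 + r2 * e2"
  have "k * (k * S + 2 * T + k') = k * (n * k)"
    using ab k' unfolding S_def T_def by (simp add: power2_eq_square algebra_simps)
  then have T2: "2 * T = n * k - k * S - k'" using k by simp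
  have "(k' * r1 + (S - n) * e1)\<^sup>2 + (k' * r2 + (S - n) * e2)\<^sup>2
      = k'\<^sup>2 * S + k' * (S - n) * (2 * T) + (S - n)\<^sup>2 * (e1\<^sup>2 + e2\<^sup>2)"
    unfolding S_def T_def by (simp add: power2_eq_square algebra_simps)
  also have "\<dots> = n * k'\<^sup>2"
    unfolding T2 k' by (simp add: power2_eq_square algebra_simps)
  finally show ?thesis unfolding S_def .
qed

lemma sum_two_squares_descent_step:
  fixes a b n k :: int
  assumes k: "0 < k" and ab: "a\<^sup>2 + b\<^sup>2 = n * k\<^sup>2" and ndvd: "\<not> (k dvd a \<and> k dvd b)"
  shows "\<exists>k' a' b'. 0 < k' \<and> k' < k \<and> a'\<^sup>2 + b'\<^sup>2 = n * k'\<^sup>2"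
proof -
  define e1 e2 where "e1 = sym_mod a k" and "e2 = sym_mod b k"
  define r1 r2 where "r1 = (a + k div 2) div k" and "r2 = (b + k div 2) div k"
  have a: "a = k * r1 + e1" and b: "b = k * r2 + e2"
    unfolding e1_def e2_def r1_def r2_def by (rule sym_mod_eq)+
  have "e1\<^sup>2 + e2\<^sup>2 = k * (n * k - k * (r1\<^sup>2 + r2\<^sup>2) - 2 * (r1 * e1 + r2 * e2))"
    using ab unfolding a b by (simp add: power2_eq_square algebra_simps)
  then obtain k' where k': "e1\<^sup>2 + e2\<^sup>2 = k * k'" ..
  have "e1\<^sup>2 + e2\<^sup>2 \<noteq> 0"
    using ndvd unfolding a b by (auto simp: add_nonneg_eq_0_iff)
  then have "0 < e1\<^sup>2 + e2\<^sup>2" by (simp add: add_pos_nonneg order_less_le)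
  then have "0 < k'" using k' k by (simp add: zero_less_mult_iff)
  have "4 * e1\<^sup>2 \<le> k\<^sup>2" "4 * e2\<^sup>2 \<le> k\<^sup>2"
    using power_mono[OF sym_mod_bound[OF k, of a], of 2] power_mono[OF sym_mod_bound[OF k, of b], of 2]
    unfolding e1_def e2_def by (simp_all add: power_mult_distrib)
  then have "2 * (k * k') \<le> k * k" using k' by (simp add: power2_eq_square)
  then have "k' < k" using k \<open>0 < k'\<close> by (simp add: algebra_simps)
  then show ?thesis
    using sum_two_squares_reflection[of k r1 e1 r2 e2 n k'] ab k' k \<open>0 < k'\<close>
    unfolding a b by auto
qed

lemma sum_two_squares_descent:
  fixes a b n k :: int
  shows "0 < k \<Longrightarrow> a\<^sup>2 + b\<^sup>2 = n * k\<^sup>2 \<Longrightarrow> \<exists>x y. x\<^sup>2 + y\<^sup>2 = n"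
proof (induction "nat k" arbitrary: a b k rule: less_induct)
  case less
  show ?case
  proof (cases "k dvd a \<and> k dvd b")
    case True
    then obtain x y where "a = k * x" "b = k * y" by (auto elim!: dvdE)
    then have "k\<^sup>2 * (x\<^sup>2 + y\<^sup>2) = k\<^sup>2 * n"
      using less.prems by (simp add: power_mult_distrib algebra_simps)
    then show ?thesis using less.prems(1) by auto
  next
    case False
    then show ?thesis
      using sum_two_squares_descent_step[OF less.prems] less.hyps by force
  qed
qed

section \<open>Gaussian integers\<close>

lemma Rset_GaussCase_iff: "z \<in> Rset GaussCase \<longleftrightarrow> Re z \<in> \<int> \<and> Im z \<in> \<int>"
  by (auto simp: Rset_def complex_eq_iff elim!: Ints_cases)

lemma Rset_IntCase_iff: "z \<in> Rset IntCase \<longleftrightarrow> Re z \<in> \<int> \<and> Im z = 0"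
  by (auto simp: Rset_def complex_eq_iff elim!: Ints_cases)

lemma Rset_add: "x \<in> Rset c \<Longrightarrow> y \<in> Rset c \<Longrightarrow> x + y \<in> Rset c"
  and Rset_diff: "x \<in> Rset c \<Longrightarrow> y \<in> Rset c \<Longrightarrow> x - y \<in> Rset c"
  and Rset_mult: "x \<in> Rset c \<Longrightarrow> y \<in> Rset c \<Longrightarrow> x * y \<in> Rset c"
  and Rset_uminus: "x \<in> Rset c \<Longrightarrow> - x \<in> Rset c"
  and Rset_cnj: "x \<in> Rset c \<Longrightarrow> cnj x \<in> Rset c"
  and Rset_of_int: "of_int n \<in> Rset c"
  and Rset_of_nat: "of_nat m \<in> Rset c"
  and Rset_subset_GaussCase: "x \<in> Rset c \<Longrightarrow> x \<in> Rset GaussCase"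
  by (cases c; simp add: Rset_GaussCase_iff Rset_IntCase_iff)+

lemma of_int_div_in_Rset: "a dvd m \<Longrightarrow> (of_int m / of_int a :: complex) \<in> Rset c"
  using Rset_of_int[of 0 c] by (cases "a = 0") (auto elim!: dvdE simp: Rset_of_int)

lemma Rset_GaussCaseE:
  assumes "z \<in> Rset GaussCase"
  obtains a b where "z = Complex (of_int a) (of_int b)"
  using assms by (auto simp: Rset_def)

lemma Complex_of_int_in_Rset_GaussCase: "Complex (of_int a) (of_int b) \<in> Rset GaussCase"
  by (auto simp: Rset_def)

lemma Complex_of_int_div_in_Rset_GaussCase_iff:
  assumes "a \<noteq> 0"
  shows "Complex (of_int m) (of_int n) / of_int a \<in> Rset GaussCase \<longleftrightarrow> a dvd m \<and> a dvd n"
proof -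
  have "(of_int k / of_int a :: real) \<in> \<int> \<longleftrightarrow> a dvd k" for k
  proof
    assume "(of_int k / of_int a :: real) \<in> \<int>"
    then obtain j where "(of_int k / of_int a :: real) = of_int j" by (auto elim: Ints_cases)
    then have "k = a * j" using assms by (simp add: field_simps flip: of_int_mult)
    then show "a dvd k" ..
  qed (use assms in \<open>auto elim!: dvdE\<close>)
  then show ?thesis by (simp add: Rset_GaussCase_iff)
qed

lemma Rset_real_eq_of_int:
  assumes "z \<in> Rset c" "cnj z = z"
  obtains n where "z = of_int n"
proof -
  have "Im z = 0" "Re z \<in> \<int>"
    using assms Rset_subset_GaussCase[OF assms(1)] by (auto simp: Rset_GaussCase_iff complex_eq_iff)
  then show ?thesis using that by (metis Ints_cases complex_eq_iff of_int_0 of_real_of_int_eq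
        Re_complex_of_real Im_complex_of_real)
qed

lemma mult_cnj_Complex_of_int:
  "Complex (of_int a) (of_int b) * cnj (Complex (of_int a) (of_int b)) = of_int (a\<^sup>2 + b\<^sup>2)"
  by (simp add: complex_eq_iff power2_eq_square)

lemma Rset_GaussCase_mult_cnj:
  assumes "z \<in> Rset GaussCase"
  obtains n where "z * cnj z = of_int n" "n \<ge> 0"
  using assms by (elim Rset_GaussCaseE) (metis mult_cnj_Complex_of_int sum_power2_ge_zero)

lemma gauss_sum_two_squares_descent:
  assumes "z \<in> Rset GaussCase" "0 < k" "z * cnj z = of_int (n * k\<^sup>2)"
  obtains h where "h \<in> Rset GaussCase" "h * cnj h = of_int n"
proof -
  obtain a b where z: "z = Complex (of_int a) (of_int b)"
    using assms(1) by (rule Rset_GaussCaseE)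
  have "a\<^sup>2 + b\<^sup>2 = n * k\<^sup>2"
    using assms(3) unfolding z mult_cnj_Complex_of_int of_int_eq_iff .
  then obtain x y where "x\<^sup>2 + y\<^sup>2 = n"
    using sum_two_squares_descent assms(2) by blast
  then show ?thesis
    using that Complex_of_int_in_Rset_GaussCase mult_cnj_Complex_of_int by metis
qed

lemma gauss_approx_div:
  assumes "g \<noteq> 0"
  obtains q where "q \<in> Rset GaussCase" "cmod (z - q * g) < cmod g"
proof -
  define t where "t = z / g"
  define q where "q = Complex (of_int (round (Re t))) (of_int (round (Im t)))"
  have "\<bar>Re t - Re q\<bar> \<le> 1 / 2" "\<bar>Im t - Im q\<bar> \<le> 1 / 2"
    unfolding q_def using of_int_round_abs_le[of "Re t"] of_int_round_abs_le[of "Im t"]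
    by (simp_all add: abs_minus_commute)
  then have "(Re t - Re q)\<^sup>2 \<le> (1 / 2)\<^sup>2" "(Im t - Im q)\<^sup>2 \<le> (1 / 2)\<^sup>2"
    by (simp_all add: power2_le_iff_abs_le)
  moreover have "(cmod (t - q))\<^sup>2 = (Re t - Re q)\<^sup>2 + (Im t - Im q)\<^sup>2"
    by (simp add: cmod_power2)
  ultimately have "(cmod (t - q))\<^sup>2 < 1"
    by (simp add: power2_eq_square)
  then have "cmod (t - q) < 1"
    by (simp add: power_less_one_iff)
  moreover have "z - q * g = g * (t - q)"
    unfolding t_def using assms by (simp add: field_simps)
  ultimately have "cmod (z - q * g) < cmod g"
    using assms by (simp add: norm_mult)
  then show ?thesis using that Complex_of_int_in_Rset_GaussCase unfolding q_def by blast
qed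

lemma Rset_GaussCase_cmod_power2:
  assumes "z \<in> Rset GaussCase"
  shows "real (nat \<lfloor>(cmod z)\<^sup>2\<rfloor>) = (cmod z)\<^sup>2"
proof -
  obtain a b where "z = Complex (of_int a) (of_int b)"
    using assms by (rule Rset_GaussCaseE)
  then have "(cmod z)\<^sup>2 = of_int (a\<^sup>2 + b\<^sup>2)" by (simp add: cmod_power2)
  then show ?thesis by simp
qed

lemma gauss_ideal_generator:
  assumes I: "I \<subseteq> Rset GaussCase"
    and I_diff: "\<And>z g q. z \<in> I \<Longrightarrow> g \<in> I \<Longrightarrow> q \<in> Rset GaussCase \<Longrightarrow> z - q * g \<in> I"
    and "z0 \<in> I" "z0 \<noteq> 0"
  obtains g where "g \<in> I" "g \<noteq> 0" "\<And>z. z \<in> I \<Longrightarrow> z / g \<in> Rset GaussCase"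
proof -
  define \<mu> :: "complex \<Rightarrow> nat" where "\<mu> z = nat \<lfloor>(cmod z)\<^sup>2\<rfloor>" for z
  obtain g where g: "g \<in> I" "g \<noteq> 0" and g_min: "\<And>z. z \<in> I \<Longrightarrow> z \<noteq> 0 \<Longrightarrow> \<mu> g \<le> \<mu> z"
    using ex_has_least_nat[of "\<lambda>z. z \<in> I \<and> z \<noteq> 0" z0 \<mu>] assms(3,4) by blast
  have "z / g \<in> Rset GaussCase" if "z \<in> I" for z
  proof -
    obtain q where q: "q \<in> Rset GaussCase" "cmod (z - q * g) < cmod g"
      using g(2) by (rule gauss_approx_div)
    have r: "z - q * g \<in> I" using I_diff[OF that g(1) q(1)] .
    have "z - q * g = 0"
    proof (rule ccontr)
      assume "z - q * g \<noteq> 0"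
      then have "real (\<mu> g) \<le> real (\<mu> (z - q * g))" using g_min[OF r] by simp
      then have "(cmod g)\<^sup>2 \<le> (cmod (z - q * g))\<^sup>2"
        unfolding \<mu>_def Rset_GaussCase_cmod_power2[OF subsetD[OF I g(1)]]
          Rset_GaussCase_cmod_power2[OF subsetD[OF I r]] .
      then show False using q(2) by (simp add: power_mono_iff)
    qed
    then show ?thesis using q(1) g(2) by (simp add: field_simps)
  qed
  then show ?thesis using that g by blast
qed

lemma gauss_bezout:
  assumes x: "x \<in> Rset GaussCase" and y: "y \<in> Rset GaussCase" and xy: "x \<noteq> 0 \<or> y \<noteq> 0"
  obtains g u v where "g \<in> Rset GaussCase" "u \<in> Rset GaussCase" "v \<in> Rset GaussCase"
    "g = u * x + v * y" "g \<noteq> 0" "x / g \<in> Rset GaussCase" "y / g \<in> Rset GaussCase"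
proof -
  define I where "I = {u * x + v * y | u v. u \<in> Rset GaussCase \<and> v \<in> Rset GaussCase}"
  have I: "I \<subseteq> Rset GaussCase"
    using x y by (auto simp: I_def intro!: Rset_add Rset_mult)
  have "x = 1 * x + 0 * y" "y = 0 * x + 1 * y" by simp_all
  then have "x \<in> I" "y \<in> I"
    unfolding I_def using Rset_of_int[of 0] Rset_of_int[of 1] by force+
  have I_diff: "z - q * g \<in> I" if zg: "z \<in> I" "g \<in> I" and q: "q \<in> Rset GaussCase" for z g q
  proof -
    obtain u1 v1 u2 v2 where "u1 \<in> Rset GaussCase" "v1 \<in> Rset GaussCase" "z = u1 * x + v1 * y"
      "u2 \<in> Rset GaussCase" "v2 \<in> Rset GaussCase" "g = u2 * x + v2 * y"
      using zg unfolding I_def by blast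
    moreover have "z - q * g = (u1 - q * u2) * x + (v1 - q * v2) * y"
      using calculation by (simp add: algebra_simps)
    ultimately show ?thesis
      unfolding I_def using q by (blast intro: Rset_diff Rset_mult)
  qed
  obtain z0 where "z0 \<in> I" "z0 \<noteq> 0"
    using xy \<open>x \<in> I\<close> \<open>y \<in> I\<close> by blast
  then obtain g where g: "g \<in> I" "g \<noteq> 0" "\<And>z. z \<in> I \<Longrightarrow> z / g \<in> Rset GaussCase"
    using gauss_ideal_generator[OF I] I_diff by blast
  moreover obtain u v where "u \<in> Rset GaussCase" "v \<in> Rset GaussCase" "g = u * x + v * y"
    using g(1) unfolding I_def by blast
  ultimately show ?thesis
    using that I \<open>x \<in> I\<close> \<open>y \<in> I\<close> by blast
qed

text \<open>A pair \<open>(w\<^sub>1, w\<^sub>2)\<close> of Gaussian integers is the quaternion \<open>w\<^sub>1 + w\<^sub>2 j\<close>, and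
  \<open>(s + q j) (w\<^sub>1 + w\<^sub>2 j) = (s w\<^sub>1 - q w\<^sub>2\<^sup>*) + (s w\<^sub>2 + q w\<^sub>1\<^sup>*) j\<close>.\<close>

lemma gauss_pair_factor:
  assumes w1: "w1 \<in> Rset GaussCase" and w2: "w2 \<in> Rset GaussCase" and a: "0 < a"
    and dvd: "w1 * cnj w1 + w2 * cnj w2 = of_int (a * K)"
  obtains s q where "s \<in> Rset GaussCase" "q \<in> Rset GaussCase" "s * cnj s + q * cnj q = of_int a"
    "(s * w1 - q * cnj w2) / of_int a \<in> Rset GaussCase"
    "(s * w2 + q * cnj w1) / of_int a \<in> Rset GaussCase"
proof -
  obtain a1 b1 c1 d1 where w1: "w1 = Complex (of_int a1) (of_int b1)"
    and w2: "w2 = Complex (of_int c1) (of_int d1)"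
    using w1 w2 by (metis Rset_GaussCaseE)
  define w where "w = Quat a1 b1 c1 d1"
  have "quat_norm w = a * K"
    using dvd unfolding w1 w2 w_def mult_cnj_Complex_of_int of_int_add[symmetric] of_int_eq_iff
    by (simp add: quat_norm_def)
  then obtain \<xi> where \<xi>: "quat_norm \<xi> = a" "of_int a dvd \<xi> * w"
    using quat_factor[of a w] a by auto
  define s where "s = Complex (of_int (qr \<xi>)) (of_int (qi \<xi>))"
  define q where "q = Complex (of_int (qj \<xi>)) (of_int (qk \<xi>))"
  have e1: "s * w1 - q * cnj w2 = Complex (of_int (qr (\<xi> * w))) (of_int (qi (\<xi> * w)))"
    and e2: "s * w2 + q * cnj w1 = Complex (of_int (qj (\<xi> * w))) (of_int (qk (\<xi> * w)))"
    unfolding s_def q_def w1 w2 w_def by (simp_all add: complex_eq_iff times_quat_def)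
  show ?thesis
  proof (rule that)
    show "s \<in> Rset GaussCase" "q \<in> Rset GaussCase"
      unfolding s_def q_def by (rule Complex_of_int_in_Rset_GaussCase)+
    show "s * cnj s + q * cnj q = of_int a"
      unfolding s_def q_def mult_cnj_Complex_of_int \<xi>(1)[symmetric] by (simp add: quat_norm_def)
    show "(s * w1 - q * cnj w2) / of_int a \<in> Rset GaussCase"
      "(s * w2 + q * cnj w1) / of_int a \<in> Rset GaussCase"
      unfolding e1 e2 Complex_of_int_div_in_Rset_GaussCase_iff[OF a[THEN less_imp_neq, symmetric]]
      using \<xi>(2) by (simp_all add: of_int_dvd_quat_iff)
  qed
qed

lemma gauss_gcd_cofactor:
  assumes A: "0 < A" and \<omega>: "\<omega> \<in> Rset GaussCase" and norm: "\<omega> * cnj \<omega> = of_int (A * C)"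
  obtains h H K where "h \<in> Rset GaussCase" "h * cnj h = of_int H" "0 < H" "H * K = A"
    "\<omega> * h / of_int A \<in> Rset GaussCase"
proof -
  have A': "(of_int A :: complex) \<noteq> 0" using A by simp
  obtain g U V where g: "U \<in> Rset GaussCase" "V \<in> Rset GaussCase" "g = U * of_int A + V * \<omega>"
    "g \<noteq> 0" "of_int A / g \<in> Rset GaussCase" "\<omega> / g \<in> Rset GaussCase"
    using gauss_bezout[OF Rset_of_int \<omega>] A' by metis
  \<comment> \<open>\<open>|g|\<^sup>2 = A K\<close> because \<open>g = U A + V \<omega>\<close> and \<open>|\<omega>|\<^sup>2 = A C\<close>\<close>
  define K where "K = U * cnj U * of_int A + U * cnj V * cnj \<omega> + cnj U * V * \<omega> + V * cnj V * of_int C"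
  have gK: "g * cnj g = of_int A * K"
    unfolding g(3) K_def using norm by (simp add: algebra_simps)
  have "of_int A * cnj K = cnj (g * cnj g)"
    unfolding gK by simp
  also have "\<dots> = g * cnj g"
    by (simp add: mult.commute)
  also have "\<dots> = of_int A * K"
    by (rule gK)
  finally have "cnj K = K" using A by auto
  have "K \<in> Rset GaussCase"
    unfolding K_def using g(1,2) \<omega> by (intro Rset_add Rset_mult Rset_cnj Rset_of_int)
  then obtain K0 where K0: "K = of_int K0" using \<open>cnj K = K\<close> by (rule Rset_real_eq_of_int)
  define h where "h = of_int A / g"
  obtain H where H: "h * cnj h = of_int H" "0 \<le> H"
    using g(5) unfolding h_def[symmetric] by (rule Rset_GaussCase_mult_cnj)
  have "(h * cnj h) * (g * cnj g) = of_int A * of_int A"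
    unfolding h_def using g(4) by (simp add: field_simps)
  then have "H * (A * K0) = A * A"
    unfolding H gK K0 by (simp flip: of_int_mult)
  then have "H * K0 = A" using A by (simp add: algebra_simps)
  moreover have "0 < H" using H(2) \<open>H * K0 = A\<close> A by (auto simp: order_le_less)
  moreover have "\<omega> * h / of_int A = \<omega> / g"
    unfolding h_def using A' g(4) by simp
  ultimately show ?thesis using that g(5,6) H(1) unfolding h_def by metis
qed

text \<open>In \<open>\<int>[i]\<close>, with \<open>\<omega> = d + b i\<close> of norm \<open>A C\<close>: the representation \<open>x + y i\<close> of
  \<open>n A\<close> is replaced by one divisible by \<open>A / gcd(A, \<omega>)\<close>, via Davenport--Cassels.\<close>

lemma sum_two_squares_compatible:
  fixes A C b d n x y :: int
  assumes A: "0 < A" and AC: "A * C = d\<^sup>2 + b\<^sup>2" and xy: "x\<^sup>2 + y\<^sup>2 = n * A"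
  shows "\<exists>s q. s\<^sup>2 + q\<^sup>2 = n * A \<and> A dvd d * s - b * q \<and> A dvd d * q + b * s"
proof -
  define \<omega> where "\<omega> = Complex (of_int d) (of_int b)"
  have "\<omega> * cnj \<omega> = of_int (A * C)"
    unfolding \<omega>_def mult_cnj_Complex_of_int AC ..
  then obtain h H K where h: "h \<in> Rset GaussCase" "h * cnj h = of_int H" "0 < H" "H * K = A"
    "\<omega> * h / of_int A \<in> Rset GaussCase"
    using gauss_gcd_cofactor[OF A] Complex_of_int_in_Rset_GaussCase unfolding \<omega>_def by metis
  define z0 where "z0 = Complex (of_int x) (of_int y)"
  have "z0 * cnj h * cnj (z0 * cnj h) = (z0 * cnj z0) * (h * cnj h)"
    by (simp add: algebra_simps)
  also have "\<dots> = of_int ((n * K) * H\<^sup>2)"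
    unfolding z0_def mult_cnj_Complex_of_int xy h(2) h(4)[symmetric]
    by (simp add: power2_eq_square algebra_simps)
  finally obtain u where u: "u \<in> Rset GaussCase" "u * cnj u = of_int (n * K)"
    using gauss_sum_two_squares_descent[of "z0 * cnj h" H "n * K"] h(1,3)
    unfolding z0_def by (metis Complex_of_int_in_Rset_GaussCase Rset_mult Rset_cnj)
  obtain s q where z: "h * u = Complex (of_int s) (of_int q)"
    using Rset_mult[OF h(1) u(1)] by (rule Rset_GaussCaseE)
  have "Complex (of_int s) (of_int q) * cnj (Complex (of_int s) (of_int q)) = of_int (n * A)"
    unfolding z[symmetric] h(4)[symmetric] using h(2) u(2) by (simp add: algebra_simps)
  then have "s\<^sup>2 + q\<^sup>2 = n * A"
    unfolding mult_cnj_Complex_of_int of_int_eq_iff .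
  have "Complex (of_int (d * s - b * q)) (of_int (d * q + b * s)) / of_int A
      = \<omega> * Complex (of_int s) (of_int q) / of_int A"
    unfolding \<omega>_def by (simp add: complex_eq_iff)
  also have "\<dots> = \<omega> * h / of_int A * u"
    unfolding z[symmetric] by (simp add: mult.assoc)
  finally have "Complex (of_int (d * s - b * q)) (of_int (d * q + b * s)) / of_int A
      \<in> Rset GaussCase"
    using Rset_mult[OF h(5) u(1)] by (simp only:)
  then have "A dvd d * s - b * q \<and> A dvd d * q + b * s"
    unfolding Complex_of_int_div_in_Rset_GaussCase_iff[OF A[THEN less_imp_neq, symmetric]] .
  with \<open>s\<^sup>2 + q\<^sup>2 = n * A\<close> show ?thesis by blast
qed

section \<open>Hermitian forms on \<open>\<complex>\<^sup>2\<close>\<close>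

lemma Rvec_iff: "a \<in> Rvec c \<longleftrightarrow> a $ 1 \<in> Rset c \<and> a $ 2 \<in> Rset c"
  by (simp add: Rvec_def forall_2)

locale hermitian_matrix2 =
  fixes \<alpha> \<beta> \<gamma> :: complex and M :: "complex^2^2"
  assumes M_def: "M = vector [vector [\<alpha>, \<beta>], vector [cnj \<beta>, \<gamma>]]"
    and cnj_alpha: "cnj \<alpha> = \<alpha>" and cnj_gamma: "cnj \<gamma> = \<gamma>"
begin

lemma M_mult_vec_1: "(M *v v) $ 1 = \<alpha> * v $ 1 + \<beta> * v $ 2"
  and M_mult_vec_2: "(M *v v) $ 2 = cnj \<beta> * v $ 1 + \<gamma> * v $ 2"
  by (simp_all add: M_def matrix_vector_mult_def sum_2)

lemma hform_eq:
  "hform M u v = cnj (u $ 1) * (\<alpha> * v $ 1 + \<beta> * v $ 2) + cnj (u $ 2) * (cnj \<beta> * v $ 1 + \<gamma> * v $ 2)"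
  by (simp add: hform_def sum_2 M_mult_vec_1 M_mult_vec_2)

lemma M_mult_vec_nonzero: "hform M a a \<noteq> 0 \<Longrightarrow> (M *v a) $ 1 \<noteq> 0 \<or> (M *v a) $ 2 \<noteq> 0"
  by (auto simp: hform_def sum_2)

lemma det_M: "det M = \<alpha> * \<gamma> - \<beta> * cnj \<beta>"
  by (simp add: det_2 M_def)

lemma alpha_mult_hform:
  "\<alpha> * hform M a a = (M *v a) $ 1 * cnj ((M *v a) $ 1) + det M * (a $ 2 * cnj (a $ 2))"
  using cnj_alpha by (simp add: hform_eq det_M M_mult_vec_1 algebra_simps)

lemma gamma_mult_hform:
  "\<gamma> * hform M a a = (M *v a) $ 2 * cnj ((M *v a) $ 2) + det M * (a $ 1 * cnj (a $ 1))"
  using cnj_gamma by (simp add: hform_eq det_M M_mult_vec_2 algebra_simps)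

lemma beta_mult_hform:
  "(M *v a) $ 1 * cnj ((M *v a) $ 2) = \<beta> * hform M a a + det M * (a $ 1 * cnj (a $ 2))"
  using cnj_alpha cnj_gamma by (simp add: hform_eq det_M M_mult_vec_1 M_mult_vec_2 algebra_simps)

lemma hform_perp: "hform M (perp (M *v a)) (perp (M *v a)) = det M * hform M a a"
  using cnj_alpha cnj_gamma
  by (simp add: hform_eq det_M perp_def M_mult_vec_1 M_mult_vec_2 algebra_simps)

lemma hform_perp_right: "hform M a (perp (M *v a)) = 0"
  using cnj_alpha cnj_gamma by (simp add: hform_eq perp_def M_mult_vec_1 M_mult_vec_2 algebra_simps)

lemma hform_scale: "hform M (k *s x) (k *s x) = cnj k * k * hform M x x"
  and hform_scale_right: "hform M a (k *s x) = k * hform M a x"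
  by (simp_all add: hform_eq algebra_simps)

lemma hform_scaled_perp:
  assumes "cnj k * k * det M = 1"
  shows "hform M (k *s perp (M *v a)) (k *s perp (M *v a)) = hform M a a"
    and "hform M a (k *s perp (M *v a)) = 0"
proof -
  have "hform M (k *s perp (M *v a)) (k *s perp (M *v a)) = cnj k * k * det M * hform M a a"
    unfolding hform_scale hform_perp by (simp add: mult.assoc)
  then show "hform M (k *s perp (M *v a)) (k *s perp (M *v a)) = hform M a a"
    using assms by simp
  show "hform M a (k *s perp (M *v a)) = 0"
    unfolding hform_scale_right hform_perp_right by simp
qed

lemma orthoregular_scaled_perp:
  assumes "a \<in> Rvec c" "k *s perp (M *v a) \<in> Rvec c" "cnj k * k * det M = 1"
  shows "orthoregular c M (hform M a a) a (k *s perp (M *v a))"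
  using assms hform_scaled_perp[OF assms(3)] by (simp add: orthoregular_def)

end

section \<open>Orthoregular bases\<close>

locale orthoregular_setting = hermitian_matrix2 +
  fixes c :: ring_case and \<delta> :: complex and \<nu> :: nat
  assumes alpha_in: "\<alpha> \<in> Rset c" and beta_in: "\<beta> \<in> Rset c" and gamma_in: "\<gamma> \<in> Rset c"
    and posdef: "posdef2 M" and nu_pos: "0 < \<nu>"
    and delta_in: "of_nat \<nu> * \<delta> \<in> Rset c"
    and delta_abs: "of_real ((cmod \<delta>)\<^sup>2) = det M"
begin

lemma delta_mult_cnj: "\<delta> * cnj \<delta> = det M"
  using delta_abs complex_norm_square[of \<delta>] by simp

lemma cnj_det: "cnj (det M) = det M"
  unfolding delta_mult_cnj[symmetric] by (simp add: mult.commute)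

lemma hform_pos: "v \<noteq> 0 \<Longrightarrow> 0 < Re (hform M v v)"
  using posdef by (simp add: posdef2_def)

lemma alpha_eq_of_int:
  obtains A where "\<alpha> = of_int A" "0 < A"
proof -
  obtain A where A: "\<alpha> = of_int A"
    using alpha_in cnj_alpha by (rule Rset_real_eq_of_int)
  have "vector [1, 0] \<noteq> (0 :: complex^2)"
    by (simp add: vec_eq_iff forall_2)
  then have "0 < Re (hform M (vector [1, 0]) (vector [1, 0]))"
    by (rule hform_pos)
  then show ?thesis using that A by (simp add: hform_eq)
qed

lemma gamma_eq_of_int:
  obtains C where "\<gamma> = of_int C"
  using gamma_in cnj_gamma by (rule Rset_real_eq_of_int)

lemma det_eq_of_int:
  obtains D where "det M = of_int D" "0 < D"
proof -
  obtain A where A: "\<alpha> = of_int A" "0 < A" by (rule alpha_eq_of_int)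
  have "det M \<in> Rset c"
    unfolding det_M using alpha_in beta_in gamma_in by (intro Rset_diff Rset_mult Rset_cnj)
  then obtain D where D: "det M = of_int D" using cnj_det by (rule Rset_real_eq_of_int)
  have "vector [- \<beta>, \<alpha>] \<noteq> (0 :: complex^2)"
    using A by (simp add: vec_eq_iff forall_2)
  then have "0 < Re (hform M (vector [- \<beta>, \<alpha>]) (vector [- \<beta>, \<alpha>]))"
    by (rule hform_pos)
  also have "hform M (vector [- \<beta>, \<alpha>]) (vector [- \<beta>, \<alpha>]) = \<alpha> * det M"
    using cnj_alpha by (simp add: hform_eq det_M algebra_simps)
  finally have "0 < real_of_int (A * D)" using A D by simp
  then have "0 < A * D" by linarith
  then show ?thesis using that D A by (simp add: zero_less_mult_iff)
qed

lemma det_nonzero: "det M \<noteq> 0"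
proof -
  obtain D where "det M = of_int D" "0 < D" by (rule det_eq_of_int)
  then show ?thesis by simp
qed

lemma delta_nonzero: "\<delta> \<noteq> 0"
  using delta_mult_cnj det_nonzero by auto

lemma cnj_inverse_delta: "cnj (1 / \<delta>) * (1 / \<delta>) * det M = 1"
  using delta_nonzero by (simp add: delta_mult_cnj[symmetric] field_simps)

lemma delta_eq_of_int_IntCase:
  assumes "c = IntCase"
  obtains d where "\<delta> = of_int d" "det M = of_int (d\<^sup>2)"
proof -
  obtain E where E: "of_nat \<nu> * \<delta> = of_int E"
    using delta_in assms by (auto simp: Rset_def)
  obtain D where D: "det M = of_int D" "0 < D" by (rule det_eq_of_int)
  have "cnj (of_nat \<nu> * \<delta>) = of_nat \<nu> * \<delta>"
    by (simp only: E complex_cnj_of_int)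
  then have "cnj \<delta> = \<delta>" using nu_pos by simp
  then have "(of_int (E\<^sup>2) :: complex) = of_int ((int \<nu>)\<^sup>2 * D)"
    using E[symmetric] delta_mult_cnj D by (simp add: power2_eq_square algebra_simps)
  then have "int \<nu> ^ 2 dvd E\<^sup>2" unfolding of_int_eq_iff by simp
  then obtain d where "E = int \<nu> * d" by (auto simp: pow_divides_pow_iff elim!: dvdE)
  then have "\<delta> = of_int d" using E nu_pos by simp
  moreover have "det M = of_int (d\<^sup>2)"
    using delta_mult_cnj[symmetric] \<open>\<delta> = of_int d\<close> by (simp add: power2_eq_square)
  ultimately show ?thesis by (rule that)
qed

text \<open>The candidate \<open>a\<^sub>1 = ((\<delta>\<^sup>* s - \<beta> q) / \<alpha>, q)\<close> satisfies
  \<open>M a\<^sub>1 = \<delta>\<^sup>* (s, (\<beta>\<^sup>* s + \<delta> q) / \<alpha>)\<close>, so \<open>a\<^sub>2 = (M a\<^sub>1)\<^sub>\<perp> / \<delta>\<close> is integral as well.\<close>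

lemma orthoregular_type_exI:
  assumes s: "s \<in> Rset c" and q: "q \<in> Rset c"
    and norm: "s * cnj s + q * cnj q = of_nat \<nu> * \<alpha>"
    and P: "(cnj \<delta> * s - \<beta> * q) / \<alpha> \<in> Rset c"
    and T: "(cnj \<beta> * s + \<delta> * q) / \<alpha> \<in> Rset c"
  shows "\<exists>a1 a2. orthoregular_type c M (of_nat \<nu> * det M) \<delta> a1 a2"
proof -
  obtain A where A: "\<alpha> = of_int A" "0 < A" by (rule alpha_eq_of_int)
  then have "\<alpha> \<noteq> 0" by simp
  define a1 where "a1 = (vector [(cnj \<delta> * s - \<beta> * q) / \<alpha>, q] :: complex^2)"
  have Ma1_1: "(M *v a1) $ 1 = cnj \<delta> * s"
    unfolding M_mult_vec_1 a1_def using \<open>\<alpha> \<noteq> 0\<close> by simp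
  have "\<alpha> * (M *v a1) $ 2 = cnj \<beta> * (cnj \<delta> * s - \<beta> * q) + \<alpha> * \<gamma> * q"
    unfolding M_mult_vec_2 a1_def using \<open>\<alpha> \<noteq> 0\<close> by (simp add: field_simps)
  also have "\<dots> = cnj \<delta> * (cnj \<beta> * s + \<delta> * q)"
    using delta_mult_cnj unfolding det_M by algebra
  finally have Ma1_2: "(M *v a1) $ 2 = cnj \<delta> * ((cnj \<beta> * s + \<delta> * q) / \<alpha>)"
    using \<open>\<alpha> \<noteq> 0\<close> by (metis nonzero_mult_div_cancel_left times_divide_eq_right)
  have "\<alpha> * hform M a1 a1 = det M * (s * cnj s + q * cnj q)"
    unfolding alpha_mult_hform Ma1_1 using delta_mult_cnj by (simp add: a1_def algebra_simps)
  also have "\<dots> = \<alpha> * (of_nat \<nu> * det M)"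
    unfolding norm by (simp add: algebra_simps)
  finally have Q: "hform M a1 a1 = of_nat \<nu> * det M"
    using \<open>\<alpha> \<noteq> 0\<close> by simp
  define a2 where "a2 = (1 / \<delta>) *s perp (M *v a1)"
  have "a2 = vector [- cnj ((cnj \<beta> * s + \<delta> * q) / \<alpha>), cnj s]"
    unfolding a2_def perp_def Ma1_1 Ma1_2 using delta_nonzero
    by (simp add: vec_eq_iff forall_2 vector_2)
  then have "a2 \<in> Rvec c"
    unfolding Rvec_iff using Rset_uminus[OF Rset_cnj[OF T]] Rset_cnj[OF s] by simp
  moreover have "a1 \<in> Rvec c" unfolding Rvec_iff a1_def using P q by simp
  ultimately have "orthoregular c M (of_nat \<nu> * det M) a1 a2"
    using orthoregular_scaled_perp[OF _ _ cnj_inverse_delta, of a1 c] unfolding a2_def Q by blast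
  then show ?thesis unfolding orthoregular_type_def a2_def by blast
qed

lemma orthoregular_type_norm_identity:
  assumes "orthoregular_type c M (of_nat \<nu> * det M) \<delta> a1 a2"
  shows "\<alpha> * of_nat \<nu> = a1 $ 2 * cnj (a1 $ 2) + a2 $ 2 * cnj (a2 $ 2)"
proof -
  have Q: "hform M a1 a1 = of_nat \<nu> * det M" and a2: "a2 = (1 / \<delta>) *s perp (M *v a1)"
    using assms unfolding orthoregular_type_def orthoregular_def by auto
  have "(M *v a1) $ 1 = cnj \<delta> * cnj (a2 $ 2)"
    unfolding a2 perp_def using delta_nonzero by simp
  then have "det M * (\<alpha> * of_nat \<nu>) = det M * (a1 $ 2 * cnj (a1 $ 2) + a2 $ 2 * cnj (a2 $ 2))"
    using alpha_mult_hform[of a1] delta_mult_cnj unfolding Q by (simp add: algebra_simps)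
  then show ?thesis using det_nonzero by simp
qed

lemma sum_two_squares_if_orthoregular_type:
  assumes "c = IntCase" "orthoregular_type c M (of_nat \<nu> * det M) \<delta> a1 a2"
  shows "\<exists>x y :: int. \<alpha> * of_nat \<nu> = of_int (x\<^sup>2 + y\<^sup>2)"
proof -
  have "a1 $ 2 \<in> Rset IntCase" "a2 $ 2 \<in> Rset IntCase"
    using assms unfolding orthoregular_type_def orthoregular_def Rvec_iff by auto
  then obtain x y where "a1 $ 2 = of_int x" "a2 $ 2 = of_int y"
    by (auto simp: Rset_def)
  then have "\<alpha> * of_nat \<nu> = of_int (x\<^sup>2 + y\<^sup>2)"
    using orthoregular_type_norm_identity[OF assms(2)] by (simp add: power2_eq_square)
  then show ?thesis by blast
qed

lemma orthoregular_type_if_sum_two_squares: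
  assumes c: "c = IntCase" and xy: "\<alpha> * of_nat \<nu> = of_int (x\<^sup>2 + y\<^sup>2)"
  shows "\<exists>a1 a2. orthoregular_type c M (of_nat \<nu> * det M) \<delta> a1 a2"
proof -
  obtain A where A: "\<alpha> = of_int A" "0 < A" by (rule alpha_eq_of_int)
  obtain C where C: "\<gamma> = of_int C" by (rule gamma_eq_of_int)
  obtain d where d: "\<delta> = of_int d" "det M = of_int (d\<^sup>2)"
    using c by (rule delta_eq_of_int_IntCase)
  obtain b where b: "\<beta> = of_int b"
    using beta_in c by (auto simp: Rset_def)
  have "(of_int (A * C) :: complex) = of_int (d\<^sup>2 + b\<^sup>2)"
    using d(2) unfolding det_M A C b by (simp add: algebra_simps power2_eq_square)
  then have "A * C = d\<^sup>2 + b\<^sup>2" by (simp only: of_int_eq_iff)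
  moreover have "(of_int (x\<^sup>2 + y\<^sup>2) :: complex) = of_int (int \<nu> * A)"
    using xy unfolding A by (simp add: mult.commute)
  then have "x\<^sup>2 + y\<^sup>2 = int \<nu> * A" by (simp only: of_int_eq_iff)
  ultimately obtain s q where sq: "s\<^sup>2 + q\<^sup>2 = int \<nu> * A" "A dvd d * s - b * q" "A dvd d * q + b * s"
    using sum_two_squares_compatible[OF A(2)] by blast
  show ?thesis
  proof (rule orthoregular_type_exI)
    show "(of_int s :: complex) \<in> Rset c" "(of_int q :: complex) \<in> Rset c"
      by (rule Rset_of_int)+
    show "of_int s * cnj (of_int s) + of_int q * cnj (of_int q) = of_nat \<nu> * \<alpha>"
      using arg_cong[OF sq(1), of "of_int :: int \<Rightarrow> complex"] unfolding A
      by (simp add: power2_eq_square)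
    show "(cnj \<delta> * of_int s - \<beta> * of_int q) / \<alpha> \<in> Rset c"
      "(cnj \<beta> * of_int s + \<delta> * of_int q) / \<alpha> \<in> Rset c"
      using of_int_div_in_Rset[OF sq(2), of c] of_int_div_in_Rset[OF sq(3), of c]
      unfolding A b d by (simp_all add: algebra_simps)
  qed
qed

lemma orthoregular_type_exists_GaussCase:
  assumes c: "c = GaussCase"
  shows "\<exists>a1 a2. orthoregular_type c M (of_nat \<nu> * det M) \<delta> a1 a2"
proof -
  obtain A where A: "\<alpha> = of_int A" "0 < A" by (rule alpha_eq_of_int)
  obtain C where C: "\<gamma> = of_int C" by (rule gamma_eq_of_int)
  define w1 where "w1 = cnj (of_nat \<nu> * \<delta>)"
  define w2 where "w2 = of_nat \<nu> * cnj \<beta>"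
  have w: "w1 \<in> Rset GaussCase" "w2 \<in> Rset GaussCase"
    unfolding w1_def w2_def using delta_in beta_in c
    by (simp_all only: Rset_cnj Rset_mult Rset_of_nat)
  have "w1 * cnj w1 + w2 * cnj w2 = of_nat \<nu> * of_nat \<nu> * (\<delta> * cnj \<delta> + \<beta> * cnj \<beta>)"
    unfolding w1_def w2_def by (simp add: algebra_simps)
  also have "\<dots> = of_int (int \<nu> * A * (int \<nu> * C))"
    unfolding delta_mult_cnj det_M A C by simp
  finally obtain s q where sq: "s \<in> Rset GaussCase" "q \<in> Rset GaussCase"
    "s * cnj s + q * cnj q = of_int (int \<nu> * A)"
    "(s * w1 - q * cnj w2) / of_int (int \<nu> * A) \<in> Rset GaussCase"
    "(s * w2 + q * cnj w1) / of_int (int \<nu> * A) \<in> Rset GaussCase"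
    using gauss_pair_factor[OF w] A(2) nu_pos by (metis of_nat_0_less_iff zero_less_mult_iff)
  have "(of_nat \<nu> :: complex) \<noteq> 0" "(of_int A :: complex) \<noteq> 0" using nu_pos A(2) by simp_all
  then have "(s * w1 - q * cnj w2) / of_int (int \<nu> * A) = (cnj \<delta> * s - \<beta> * q) / \<alpha>"
    "(s * w2 + q * cnj w1) / of_int (int \<nu> * A) = (cnj \<beta> * s + \<delta> * q) / \<alpha>"
    unfolding w1_def w2_def A by (simp_all add: field_simps)
  then show ?thesis
    using orthoregular_type_exI[of s q] sq A(1) c by simp
qed

lemma hform_eq_lambda:
  assumes "hform M a a = of_nat \<nu> * det M"
  shows "(M *v a) $ 1 * cnj ((M *v a) $ 1) = det M * (\<alpha> * of_nat \<nu> - a $ 2 * cnj (a $ 2))"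
    and "(M *v a) $ 2 * cnj ((M *v a) $ 2) = det M * (\<gamma> * of_nat \<nu> - a $ 1 * cnj (a $ 1))"
    and "(M *v a) $ 1 * cnj ((M *v a) $ 2) = det M * (\<beta> * of_nat \<nu> + a $ 1 * cnj (a $ 2))"
  using alpha_mult_hform[of a] gamma_mult_hform[of a] beta_mult_hform[of a] assms
  by (simp_all add: algebra_simps)

lemma M_mult_vec_in_Rvec: "a \<in> Rvec c \<Longrightarrow> (M *v a) $ 1 \<in> Rset c \<and> (M *v a) $ 2 \<in> Rset c"
  unfolding Rvec_iff M_mult_vec_1 M_mult_vec_2 using alpha_in beta_in gamma_in
  by (auto intro!: Rset_add Rset_mult Rset_cnj)

lemma orthoregular_extension_IntCase:
  assumes c: "c = IntCase" and a1: "a1 \<in> Rvec c" and Q: "hform M a1 a1 = of_nat \<nu> * det M"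
  shows "\<exists>a2. orthoregular c M (of_nat \<nu> * det M) a1 a2"
proof -
  obtain d where d: "\<delta> = of_int d" "det M = of_int (d\<^sup>2)"
    using c by (rule delta_eq_of_int_IntCase)
  obtain A where A: "\<alpha> = of_int A" by (rule alpha_eq_of_int)
  obtain C where C: "\<gamma> = of_int C" by (rule gamma_eq_of_int)
  obtain p q where pq: "a1 $ 1 = of_int p" "a1 $ 2 = of_int q"
    using a1 c by (auto simp: Rvec_iff Rset_def)
  obtain W1 W2 where W: "(M *v a1) $ 1 = of_int W1" "(M *v a1) $ 2 = of_int W2"
    using M_mult_vec_in_Rvec[OF a1] c by (auto simp: Rset_def)
  have d_dvd: "d dvd W" if "(of_int W * cnj (of_int W) :: complex) = of_int (d\<^sup>2) * of_int n" for W n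
  proof -
    have "W\<^sup>2 = d\<^sup>2 * n"
      using that unfolding of_int_eq_iff[symmetric, where 'a=complex] by (simp add: power2_eq_square)
    then have "d\<^sup>2 dvd W\<^sup>2" by simp
    then show ?thesis using pow_divides_pow_iff[of 2 d W] by simp
  qed
  have "d dvd W1"
    using hform_eq_lambda(1)[OF Q] unfolding W pq d(2) A
    by (intro d_dvd[where n = "A * int \<nu> - q\<^sup>2"]) (simp add: power2_eq_square)
  moreover have "d dvd W2"
    using hform_eq_lambda(2)[OF Q] unfolding W pq d(2) C
    by (intro d_dvd[where n = "C * int \<nu> - p\<^sup>2"]) (simp add: power2_eq_square)
  ultimately have "(1 / \<delta>) *s perp (M *v a1) \<in> Rvec c"
    unfolding Rvec_iff perp_def W d(1) c
    by (auto simp: Rset_uminus of_int_div_in_Rset simp flip: of_int_minus)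
  then show ?thesis
    using orthoregular_scaled_perp[OF a1 _ cnj_inverse_delta] Q by metis
qed

lemma gcd_M_mult_vec_norm:
  assumes c: "c = GaussCase" and a1: "a1 \<in> Rvec c" and Q: "hform M a1 a1 = of_nat \<nu> * det M"
  obtains g m where "g \<in> Rset GaussCase" "g \<noteq> 0" "(M *v a1) $ 1 / g \<in> Rset GaussCase"
    "(M *v a1) $ 2 / g \<in> Rset GaussCase" "g * cnj g = det M * of_int m"
proof -
  define w1 where "w1 = (M *v a1) $ 1"
  define w2 where "w2 = (M *v a1) $ 2"
  have w: "w1 \<in> Rset GaussCase" "w2 \<in> Rset GaussCase"
    using M_mult_vec_in_Rvec[OF a1] c unfolding w1_def w2_def by auto
  have "w1 \<noteq> 0 \<or> w2 \<noteq> 0"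
    using M_mult_vec_nonzero[of a1] Q det_nonzero nu_pos unfolding w1_def w2_def by simp
  then obtain g u v where g: "g \<in> Rset GaussCase" "u \<in> Rset GaussCase" "v \<in> Rset GaussCase"
    "g = u * w1 + v * w2" "g \<noteq> 0" "w1 / g \<in> Rset GaussCase" "w2 / g \<in> Rset GaussCase"
    using gauss_bezout[OF w] by metis
  define p q where "p = a1 $ 1" and "q = a1 $ 2"
  define b where "b = \<beta> * of_nat \<nu> + p * cnj q"
  define m where "m = u * cnj u * (\<alpha> * of_nat \<nu> - q * cnj q)
    + v * cnj v * (\<gamma> * of_nat \<nu> - p * cnj p) + u * cnj v * b + cnj u * v * cnj b"
  have "g * cnj g = u * cnj u * (w1 * cnj w1) + v * cnj v * (w2 * cnj w2)
      + u * cnj v * (w1 * cnj w2) + cnj u * v * cnj (w1 * cnj w2)"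
    unfolding g(4) by (simp add: algebra_simps)
  also have "\<dots> = det M * m"
    unfolding w1_def w2_def hform_eq_lambda[OF Q] m_def b_def p_def q_def
    using cnj_det by (simp add: algebra_simps)
  finally have gm: "g * cnj g = det M * m" .
  have "det M * cnj m = cnj (g * cnj g)"
    unfolding gm using cnj_det by simp
  also have "\<dots> = g * cnj g" by (simp add: mult.commute)
  also have "\<dots> = det M * m" by (rule gm)
  finally have "cnj m = m" using det_nonzero by simp
  have "m \<in> Rset GaussCase"
    unfolding m_def b_def p_def q_def using g(2,3) a1 alpha_in beta_in gamma_in c
    by (auto simp: Rvec_iff intro!: Rset_add Rset_mult Rset_diff Rset_cnj Rset_of_nat)
  then obtain m0 where "m = of_int m0" using \<open>cnj m = m\<close> by (rule Rset_real_eq_of_int)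
  then show ?thesis using that g(1,5,6,7) gm unfolding w1_def w2_def by blast
qed

lemma orthoregular_extension_GaussCase:
  assumes c: "c = GaussCase" and a1: "a1 \<in> Rvec c" and Q: "hform M a1 a1 = of_nat \<nu> * det M"
  shows "\<exists>a2. orthoregular c M (of_nat \<nu> * det M) a1 a2"
proof -
  obtain g m where g: "g \<in> Rset GaussCase" "g \<noteq> 0" "(M *v a1) $ 1 / g \<in> Rset GaussCase"
    "(M *v a1) $ 2 / g \<in> Rset GaussCase" "g * cnj g = det M * of_int m"
    using gcd_M_mult_vec_norm[OF assms] .
  obtain D where D: "det M = of_int D" "0 < D" by (rule det_eq_of_int)
  define z where "z = of_nat \<nu> * g * cnj (of_nat \<nu> * \<delta>)"
  have "z \<in> Rset GaussCase"
    unfolding z_def using g(1) delta_in c by (simp only: Rset_mult Rset_of_nat Rset_cnj)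
  moreover have "z * cnj z = of_nat \<nu> ^ 4 * (g * cnj g) * (\<delta> * cnj \<delta>)"
    unfolding z_def by (simp add: algebra_simps power4_eq_xxxx)
  then have "z * cnj z = of_int (m * (int \<nu> ^ 2 * D)\<^sup>2)"
    unfolding g(5) delta_mult_cnj D(1) by (simp add: algebra_simps power2_eq_square power4_eq_xxxx)
  ultimately obtain h where h: "h \<in> Rset GaussCase" "h * cnj h = of_int m"
    using gauss_sum_two_squares_descent nu_pos D(2) by (metis of_nat_0_less_iff zero_less_mult_iff
        zero_less_power)
  define k where "k = cnj h / cnj g"
  have "m \<noteq> 0" using g(2,5) det_nonzero by auto
  have "cnj k * k * det M = (h * cnj h) * det M / (g * cnj g)"
    unfolding k_def by (simp add: field_simps)
  also have "\<dots> = 1"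
    unfolding g(5) h(2) using det_nonzero \<open>m \<noteq> 0\<close> by simp
  finally have k: "cnj k * k * det M = 1" .
  have "k *s perp (M *v a1) = vector [- cnj (h * ((M *v a1) $ 2 / g)), cnj (h * ((M *v a1) $ 1 / g))]"
    unfolding k_def perp_def by (simp add: vec_eq_iff forall_2)
  then have "k *s perp (M *v a1) \<in> Rvec c"
    unfolding Rvec_iff c
    using Rset_uminus[OF Rset_cnj[OF Rset_mult[OF h(1) g(4)]]] Rset_cnj[OF Rset_mult[OF h(1) g(3)]]
    by simp
  then show ?thesis
    using orthoregular_scaled_perp[OF a1 _ k] Q by metis
qed

lemma orthoregular_extension:
  assumes "a1 \<in> Rvec c" "hform M a1 a1 = of_nat \<nu> * det M"
  shows "\<exists>a2. orthoregular c M (of_nat \<nu> * det M) a1 a2"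
  using assms orthoregular_extension_IntCase orthoregular_extension_GaussCase by (cases c) auto

end

theorem mainTheorem13:
  fixes c :: ring_case and \<alpha> \<beta> \<gamma> \<delta> :: complex and \<nu> :: nat and M :: "complex^2^2"
  assumes M_def: "M = vector [vector [\<alpha>, \<beta>], vector [cnj \<beta>, \<gamma>]]"
    and entries: "\<alpha> \<in> Rset c" "\<beta> \<in> Rset c" "\<gamma> \<in> Rset c"
    and herm: "hermitian2 M" and pd: "posdef2 M"
    and sq: "abs_square_in c (det M)"
    and nu: "\<nu> > 0"
    and delta_in: "of_nat \<nu> * \<delta> \<in> Rset c"
    and delta_abs: "of_real ((cmod \<delta>)^2) = det M"
  shows "(c = IntCase \<longrightarrow>
            ((\<exists>a1 a2. orthoregular_type c M (of_nat \<nu> * det M) \<delta> a1 a2) \<longleftrightarrow>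
             (\<exists>x y :: int. \<alpha> * of_nat \<nu> = of_int (x^2 + y^2))))
       \<and> (c = GaussCase \<longrightarrow> (\<exists>a1 a2. orthoregular_type c M (of_nat \<nu> * det M) \<delta> a1 a2))
       \<and> (\<forall>a1 \<in> Rvec c. hform M a1 a1 = of_nat \<nu> * det M \<longrightarrow>
            (\<exists>a2. orthoregular c M (of_nat \<nu> * det M) a1 a2))"
proof -
  have "cnj \<alpha> = \<alpha>" "cnj \<gamma> = \<gamma>"
    using herm unfolding hermitian2_def M_def by (metis vector_2)+
  then interpret orthoregular_setting \<alpha> \<beta> \<gamma> M c \<delta> \<nu>
    using M_def entries pd nu delta_in delta_abs by unfold_locales
  show ?thesis
    using sum_two_squares_if_orthoregular_type orthoregular_type_if_sum_two_squares
      orthoregular_type_exists_GaussCase orthoregular_extension by blast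
qed

end
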